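(* Let $X$ be a vector field on $\mathbb{S}^1$ with support function $\phi_X$, let $A\in\mathrm{O}_0(1,2)$ and $\sigma\in\mathbb{R}^{1,2}$. Then the support function of $A_*X+\Lambda(\sigma)$ satisfies $\mathrm{gr}(\phi_{A_*X+\Lambda(\sigma)})=\mathrm{Is}(A,\sigma)\,\mathrm{gr}(\phi_X)$.
   Context: $\mathbb{R}^{1,2}$ is $\mathbb{R}^3$ with $\langle x,y\rangle=-x_0y_0+x_1y_1+x_2y_2$; $\mathrm{O}_0(1,2)$ is the identity component of its linear isometry group, acting on the closed Klein disk $\overline{\mathbb{D}^2}$ (and on $\mathbb{S}^1$) by $A\cdot\eta=\Pi(A(1,\eta))$ where $\Pi(x_0,x_1,x_2)=(x_1/x_0,x_2/x_0)$. $A_*X$ is the pushforward of the vector field $X$ by the diffeomorphism $z\mapsto A\cdot z$ of $\mathbb{S}^1$. The Killing field $\Lambda(\sigma)$ (extended to $\mathbb{S}^1$) is $\eta\mapsto\mathrm{d}_{(1,\eta)}\Pi((1,\eta)\boxtimes\sigma)$, where $\langle x\boxtimes y,v\rangle=\det(x,y,v)$. The support function of a vector field $Y$ on $\mathbb{S}^1$ is $\phi_Y$ with $Y(z)=iz\phi_Y(z)$, and $\mathrm{gr}(\phi_Y)=\{(z,\phi_Y(z)):z\in\mathbb{S}^1\}\subset\overline{\mathbb{D}^2}\times\mathbb{R}$. The map $\mathrm{Is}(A,\sigma)$ acts on $\overline{\mathbb{D}^2}\times\mathbb{R}$ by $\mathrm{Is}(A,\sigma)(\eta,t)=\left(A\cdot\eta,\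 \frac{t}{-\langle A(1,\eta),(1,0,0)\rangle}+\langle(1,A\cdot\eta),\sigma\rangle\right)$. *)

theory Defs
  imports "HOL-Analysis.Analysis"
begin

text \<open>Minkowski space R^{1,2}: vectors x :: real^3 with x$1 = x_0, x$2 = x_1, x$3 = x_2.\<close>

definition mink :: "real^3 \<Rightarrow> real^3 \<Rightarrow> real" where
  "mink x y = - (x$1 * y$1) + x$2 * y$2 + x$3 * y$3"

definition O12 :: "(real^3^3) set" where
  "O12 = {A. \<forall>x y. mink (A *v x) (A *v y) = mink x y}"

definition O12_0 :: "(real^3^3) set" where
  "O12_0 = connected_component_set O12 (mat 1)"

text \<open>Points of the plane (Klein disk, circle) are complex numbers eta = eta_1 + i eta_2.\<close>

definition lift :: "complex \<Rightarrow> real^3" where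
  "lift \<eta> = vector [1, Re \<eta>, Im \<eta>]"

definition Pi :: "real^3 \<Rightarrow> complex" where
  "Pi x = Complex (x$2 / x$1) (x$3 / x$1)"

definition act :: "real^3^3 \<Rightarrow> complex \<Rightarrow> complex" where
  "act A \<eta> = Pi (A *v lift \<eta>)"

definition pushforward :: "real^3^3 \<Rightarrow> (complex \<Rightarrow> complex) \<Rightarrow> complex \<Rightarrow> complex" where
  "pushforward A X w =
     (let z = inv_into (sphere 0 1) (act A) w in frechet_derivative (act A) (at z) (X z))"

definition mcross :: "real^3 \<Rightarrow> real^3 \<Rightarrow> real^3" where
  "mcross x y = (THE u. \<forall>v. mink u v = det (vector [x, y, v] :: real^3^3))"

definition Killing :: "real^3 \<Rightarrow> complex \<Rightarrow> complex" where
  "Killing \<sigma> \<eta> = frechet_derivative Pi (at (lift \<eta>)) (mcross (lift \<eta>) \<sigma>)"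

definition supp :: "(complex \<Rightarrow> complex) \<Rightarrow> complex \<Rightarrow> real" where
  "supp Y z = (THE t::real. Y z = \<i> * z * complex_of_real t)"

definition gr :: "(complex \<Rightarrow> real) \<Rightarrow> (complex \<times> real) set" where
  "gr \<phi> = {(z, \<phi> z) | z. z \<in> sphere 0 1}"

definition Is :: "real^3^3 \<Rightarrow> real^3 \<Rightarrow> complex \<times> real \<Rightarrow> complex \<times> real" where
  "Is A \<sigma> p = (case p of (\<eta>, t) \<Rightarrow>
     (act A \<eta>, t / (- mink (A *v lift \<eta>) (vector [1, 0, 0])) + mink (lift (act A \<eta>)) \<sigma>))"

end

theory Submission
  imports Defs
begin

(* A Minkowski isometry of determinant 1
   commutes with the cross product, and the derivative of the projective action sends
   dPi_{(1,z)} u to dPi_{A(1,z)} (A u); hence A pushes the Killing field of tau forward to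
   the Killing field of A tau.  On the circle a field with support value t at z agrees at z
   with t times the Killing field of -e0, so its pushforward at w = A.z is
   t * Lambda(-A e0)(w), whose support value <(1,w), -A e0> t equals t / (A(1,z))_0.
   Adding Lambda(sigma), with support value <(1,w), sigma>, gives exactly Is(A, sigma). *)

lemma matrix_vector_mult_3:
  fixes A :: "real^3^3"
  shows "(A *v x) $ i = A$i$1 * x$1 + A$i$2 * x$2 + A$i$3 * x$3"
  by (simp add: matrix_vector_mult_def sum_3)

definition mink_matrix :: "real^3^3" where
  "mink_matrix = (\<chi> i j. if i = j then (if i = 1 then -1 else 1) else 0)"

lemma mink_eq_inner: "mink x y = x \<bullet> (mink_matrix *v y)"
  by (simp add: mink_def mink_matrix_def inner_vec_def sum_3 matrix_vector_mult_3)

lemma mink_matrix_squared: "mink_matrix ** mink_matrix = mat 1"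
  by (simp add: mink_matrix_def vec_eq_iff forall_3 matrix_matrix_mult_def sum_3 mat_def)

lemma det_mink_matrix: "det mink_matrix = -1"
  by (simp add: det_3 mink_matrix_def)

lemma mink_nondegenerate:
  assumes "\<And>v. mink u v = mink u' v"
  shows "u = u'"
proof -
  have "\<And>v. (mink_matrix *v v) \<bullet> u = (mink_matrix *v v) \<bullet> u'"
    using assms by (simp add: mink_eq_inner inner_commute)
  hence "\<And>v. v \<bullet> u = v \<bullet> u'"
    by (metis matrix_vector_mul_assoc mink_matrix_squared matrix_vector_mul_lid)
  thus ?thesis by (metis vector_eq_ldot)
qed

lemma inner_matrix_vector_mult_left:
  fixes A :: "real^'n^'m"
  shows "(A *v x) \<bullet> y = x \<bullet> (transpose A *v y)"
  by (metis dot_lmul_matrix vector_transpose_matrix)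

lemma O12_transpose_mink_matrix:
  assumes "A \<in> O12"
  shows "transpose A ** mink_matrix ** A = mink_matrix"
proof -
  have "x \<bullet> ((transpose A ** mink_matrix ** A) *v y) = x \<bullet> (mink_matrix *v y)" for x y
  proof -
    have "x \<bullet> ((transpose A ** mink_matrix ** A) *v y) = (A *v x) \<bullet> (mink_matrix *v (A *v y))"
      by (simp add: inner_matrix_vector_mult_left matrix_vector_mul_assoc matrix_mul_assoc)
    also have "\<dots> = mink x y"
      using assms by (simp add: O12_def flip: mink_eq_inner)
    finally show ?thesis by (simp add: mink_eq_inner)
  qed
  thus ?thesis by (metis matrix_eq vector_eq_ldot)
qed

lemma O12_det_squared: "A \<in> O12 \<Longrightarrow> det A * det A = 1"
  using arg_cong[OF O12_transpose_mink_matrix, of A det]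
  by (simp add: det_mul det_mink_matrix)

lemma O12_inverse:
  assumes "A \<in> O12"
  obtains B where "B \<in> O12" "B ** A = mat 1" "A ** B = mat 1"
proof -
  define B where "B = mink_matrix ** transpose A ** mink_matrix"
  have "B ** A = mink_matrix ** (transpose A ** mink_matrix ** A)"
    by (simp add: B_def matrix_mul_assoc)
  hence BA: "B ** A = mat 1"
    by (simp add: O12_transpose_mink_matrix[OF assms] mink_matrix_squared)
  hence AB: "A ** B = mat 1"
    using matrix_left_right_inverse by blast
  hence ABx: "A *v (B *v x) = x" for x
    by (simp add: matrix_vector_mul_assoc)
  have "mink (B *v x) (B *v y) = mink x y" for x y
  proof -
    have "mink (A *v (B *v x)) (A *v (B *v y)) = mink (B *v x) (B *v y)"
      using assms by (simp add: O12_def)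
    thus ?thesis by (simp add: ABx)
  qed
  hence "B \<in> O12" by (simp add: O12_def)
  thus ?thesis using BA AB that by blast
qed

lemma continuous_on_det_3: "continuous_on S (det :: real^3^3 \<Rightarrow> real)"
  unfolding det_3[abs_def] by (intro continuous_intros)

lemma O12_0_det:
  assumes "A \<in> O12_0"
  shows "A \<in> O12" "det A = 1"
proof -
  let ?S = "connected_component_set O12 (mat 1)"
  have A: "A \<in> ?S" using assms by (simp add: O12_0_def)
  thus "A \<in> O12" using connected_component_subset by blast
  have I: "mat 1 \<in> ?S" by (simp add: O12_def)
  have dets: "det ` ?S \<subseteq> {-1, 1}"
  proof
    fix d assume "d \<in> det ` ?S"
    then obtain B where "B \<in> O12" "d = det B"
      using connected_component_subset by blast
    thus "d \<in> {-1, 1}"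
      using O12_det_squared square_eq_1_iff by auto
  qed
  have "connected (det ` ?S)"
    by (intro connected_continuous_image continuous_on_det_3 connected_connected_component)
  moreover have "finite (det ` ?S)"
    using dets finite_subset by blast
  ultimately obtain d where "det ` ?S = {d}"
    using A connected_finite_iff_sing by blast
  moreover have "det A \<in> det ` ?S" "det (mat 1 :: real^3^3) \<in> det ` ?S"
    using A I by blast+
  ultimately show "det A = 1" by simp
qed

lemma mink_scaleR_left: "mink (c *\<^sub>R x) y = c * mink x y"
  by (simp add: mink_def algebra_simps)

lemma mink_lift_self: "mink (lift z) (lift z) = (cmod z)\<^sup>2 - 1"
  unfolding cmod_power2 by (simp add: mink_def lift_def power2_eq_square)

lemma null_vector_nth_1_nonzero:
  assumes "mink x x = 0" "x \<noteq> 0"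
  shows "x$1 \<noteq> 0"
proof
  assume "x$1 = 0"
  hence "(x$2)\<^sup>2 + (x$3)\<^sup>2 = 0"
    using assms(1) by (simp add: mink_def power2_eq_square)
  hence "x = 0"
    using \<open>x$1 = 0\<close> by (simp add: vec_eq_iff forall_3 sum_power2_eq_zero_iff)
  with assms(2) show False ..
qed

lemma Pi_null_in_sphere:
  assumes "mink x x = 0" "x$1 \<noteq> 0"
  shows "Pi x \<in> sphere 0 1"
proof -
  have "(x$2 / x$1)\<^sup>2 + (x$3 / x$1)\<^sup>2 = 1"
    using assms by (simp add: mink_def power2_eq_square field_simps)
  thus ?thesis by (simp add: Pi_def cmod_def)
qed

lemma lift_Pi: "x$1 \<noteq> 0 \<Longrightarrow> lift (Pi x) = (1 / x$1) *\<^sub>R x"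
  by (simp add: lift_def Pi_def vec_eq_iff forall_3)

lemma Pi_scaleR: "c \<noteq> 0 \<Longrightarrow> Pi (c *\<^sub>R x) = Pi x"
  by (simp add: Pi_def)

lemma Pi_lift: "Pi (lift z) = z"
  by (simp add: Pi_def lift_def complex_eq_iff)

lemma O12_lift_nth_1_nonzero:
  assumes "A \<in> O12" "z \<in> sphere 0 1"
  shows "(A *v lift z)$1 \<noteq> 0"
proof (rule null_vector_nth_1_nonzero)
  have isometry: "mink (A *v x) (A *v y) = mink x y" for x y
    using assms(1) by (simp add: O12_def)
  show "mink (A *v lift z) (A *v lift z) = 0"
    using assms(2) by (simp add: isometry mink_lift_self)
  have "mink (A *v lift z) (A *v vector [1, 0, 0]) = -1"
    unfolding isometry by (simp add: mink_def lift_def)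
  thus "A *v lift z \<noteq> 0"
    by (auto simp: mink_def)
qed

lemma act_in_sphere: "A \<in> O12 \<Longrightarrow> z \<in> sphere 0 1 \<Longrightarrow> act A z \<in> sphere 0 1"
  unfolding act_def
  by (intro Pi_null_in_sphere O12_lift_nth_1_nonzero)
     (auto simp: O12_def mink_lift_self)

lemma act_mult:
  assumes "(A *v lift z)$1 \<noteq> 0"
  shows "act B (act A z) = act (B ** A) z"
  using assms
  by (simp add: act_def lift_Pi Pi_scaleR matrix_vector_mult_scaleR matrix_vector_mul_assoc)

lemma act_mat_1: "act (mat 1) z = z"
  by (simp add: act_def Pi_lift)

lemma act_bij_betw_sphere:
  assumes "A \<in> O12"
  shows "bij_betw (act A) (sphere 0 1) (sphere 0 1)"
proof -
  obtain B where "B \<in> O12" "B ** A = mat 1" "A ** B = mat 1"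
    using O12_inverse[OF assms] .
  thus ?thesis
    using assms act_in_sphere
    by (intro bij_betw_byWitness[where f' = "act B"])
       (auto simp: act_mult O12_lift_nth_1_nonzero act_mat_1 simp del: mem_sphere mem_sphere_0)
qed

definition DPi :: "real^3 \<Rightarrow> real^3 \<Rightarrow> complex" where
  "DPi x u = Complex ((u$2 * x$1 - x$2 * u$1) / (x$1)\<^sup>2) ((u$3 * x$1 - x$3 * u$1) / (x$1)\<^sup>2)"

lemma Pi_has_derivative:
  assumes "x$1 \<noteq> 0"
  shows "(Pi has_derivative DPi x) (at x)"
proof -
  have Pi_eq: "Pi = (\<lambda>y. complex_of_real (y$2 / y$1) + \<i> * complex_of_real (y$3 / y$1))"
    by (auto simp: Pi_def complex_eq_iff)
  have nth: "((\<lambda>y::real^3. y$i) has_derivative (\<lambda>u. u$i)) (at y)" for i y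
    by (rule bounded_linear.has_derivative[OF bounded_linear_vec_nth has_derivative_ident])
  show ?thesis
    unfolding Pi_eq
    apply (rule derivative_eq_intros nth | use assms in simp)+
    apply (rule ext)
    apply (simp add: DPi_def complex_eq_iff flip: of_real_inverse of_real_mult of_real_divide)
    using assms apply (simp add: field_simps power2_eq_square)
    done
qed

lemma linear_DPi: "linear (DPi x)"
  by (rule linearI) (auto simp: DPi_def complex_eq_iff divide_simps algebra_simps)

lemma DPi_self: "DPi x x = 0"
  by (simp add: DPi_def complex_eq_iff algebra_simps)

lemma DPi_scaleR: "c \<noteq> 0 \<Longrightarrow> DPi (c *\<^sub>R x) (c *\<^sub>R u) = DPi x u"
  by (auto simp: DPi_def complex_eq_iff divide_simps algebra_simps power2_eq_square)

definition Dlift :: "complex \<Rightarrow> real^3" where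
  "Dlift h = vector [0, Re h, Im h]"

lemma lift_has_derivative: "(lift has_derivative Dlift) (at z)"
proof -
  have lift_eq: "lift = (\<lambda>h. vector [1, 0, 0] + (Re h *\<^sub>R vector [0, 1, 0] + Im h *\<^sub>R vector [0, 0, 1]))"
    and Dlift_eq: "Dlift = (\<lambda>h. Re h *\<^sub>R vector [0, 1, 0] + Im h *\<^sub>R vector [0, 0, 1])"
    by (simp_all add: fun_eq_iff vec_eq_iff forall_3 lift_def Dlift_def)
  show ?thesis
    unfolding lift_eq Dlift_eq by (rule derivative_eq_intros | simp)+
qed

lemma act_has_derivative:
  assumes "(A *v lift z)$1 \<noteq> 0"
  shows "(act A has_derivative (\<lambda>h. DPi (A *v lift z) (A *v Dlift h))) (at z)"
proof -
  have "((\<lambda>\<zeta>. A *v lift \<zeta>) has_derivative (\<lambda>h. A *v Dlift h)) (at z)"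
    using bounded_linear.has_derivative[OF matrix_vector_mul_bounded_linear lift_has_derivative] .
  from diff_chain_at[OF this Pi_has_derivative[OF assms]]
  have "(Pi \<circ> (\<lambda>\<zeta>. A *v lift \<zeta>) has_derivative DPi (A *v lift z) \<circ> (\<lambda>h. A *v Dlift h)) (at z)" .
  moreover have "act A = Pi \<circ> (\<lambda>\<zeta>. A *v lift \<zeta>)"
    by (simp add: fun_eq_iff act_def)
  ultimately show ?thesis
    by (simp add: comp_def)
qed

lemma Dlift_DPi_lift: "Dlift (DPi (lift z) u) = u - u$1 *\<^sub>R lift z"
  by (simp add: Dlift_def DPi_def lift_def vec_eq_iff forall_3)

lemma frechet_derivative_act_DPi:
  assumes "(A *v lift z)$1 \<noteq> 0"
  shows "frechet_derivative (act A) (at z) (DPi (lift z) u) = DPi (A *v lift z) (A *v u)"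
proof -
  have "frechet_derivative (act A) (at z) (DPi (lift z) u)
      = DPi (A *v lift z) (A *v u - u$1 *\<^sub>R (A *v lift z))"
    using act_has_derivative[OF assms]
    by (simp add: frechet_derivative_at[symmetric] Dlift_DPi_lift
        matrix_vector_mult_diff_distrib matrix_vector_mult_scaleR)
  also have "\<dots> = DPi (A *v lift z) (A *v u)"
    by (simp add: linear_diff[OF linear_DPi] linear_scale[OF linear_DPi] DPi_self)
  finally show ?thesis .
qed

lemma mcross_eq:
  "mcross x y = vector [x$3 * y$2 - x$2 * y$3, x$3 * y$1 - x$1 * y$3, x$1 * y$2 - x$2 * y$1]"
  unfolding mcross_def
proof (rule the_equality)
  show "\<forall>v. mink (vector [x$3 * y$2 - x$2 * y$3, x$3 * y$1 - x$1 * y$3, x$1 * y$2 - x$2 * y$1]) v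
          = det (vector [x, y, v] :: real^3^3)"
    by (simp add: mink_def det_3 algebra_simps)
  thus "\<forall>v. mink u v = det (vector [x, y, v] :: real^3^3) \<Longrightarrow>
      u = vector [x$3 * y$2 - x$2 * y$3, x$3 * y$1 - x$1 * y$3, x$1 * y$2 - x$2 * y$1]" for u
    by (metis mink_nondegenerate)
qed

lemma mink_mcross: "mink (mcross x y) v = det (vector [x, y, v] :: real^3^3)"
  by (simp add: mcross_eq mink_def det_3 algebra_simps)

lemma mcross_scaleR_left: "mcross (c *\<^sub>R x) y = c *\<^sub>R mcross x y"
  by (simp add: mcross_eq vec_eq_iff forall_3 algebra_simps)

lemma rows_matrix_vector_mult:
  fixes A :: "real^3^3"
  shows "(vector [A *v x, A *v y, A *v v] :: real^3^3) = vector [x, y, v] ** transpose A"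
  by (simp add: vec_eq_iff forall_3 matrix_matrix_mult_def sum_3 matrix_vector_mult_3 transpose_def)

lemma O12_mcross:
  assumes "A \<in> O12" "det A = 1"
  shows "A *v mcross x y = mcross (A *v x) (A *v y)"
proof (rule mink_nondegenerate)
  fix w
  obtain B where "A ** B = mat 1"
    using O12_inverse[OF assms(1)] by blast
  then obtain v where w: "w = A *v v"
    by (metis matrix_vector_mul_assoc matrix_vector_mul_lid)
  have "mink (A *v mcross x y) (A *v v) = det (vector [x, y, v] :: real^3^3)"
    using assms(1) by (simp add: O12_def mink_mcross)
  also have "\<dots> = det (vector [A *v x, A *v y, A *v v] :: real^3^3)"
    by (simp add: rows_matrix_vector_mult det_mul assms(2))
  finally show "mink (A *v mcross x y) w = mink (mcross (A *v x) (A *v y)) w"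
    by (simp add: w mink_mcross)
qed

lemma Killing_eq_DPi: "Killing \<sigma> \<eta> = DPi (lift \<eta>) (mcross (lift \<eta>) \<sigma>)"
  using Pi_has_derivative[of "lift \<eta>"]
  by (simp add: Killing_def lift_def frechet_derivative_at[symmetric])

lemma Killing_on_sphere:
  assumes "w \<in> sphere 0 1"
  shows "Killing \<sigma> w = \<i> * w * complex_of_real (mink (lift w) \<sigma>)"
proof -
  have "(cmod w)\<^sup>2 = 1"
    using assms by simp
  hence "(Re w)\<^sup>2 + (Im w)\<^sup>2 = 1"
    by (simp add: cmod_power2)
  hence unit: "Im w * (Im w * c) + Re w * (Re w * c) = c" for c
    by (metis distrib_right mult.assoc mult_1 power2_eq_square add.commute)
  show ?thesis
    by (simp add: Killing_eq_DPi DPi_def mcross_eq lift_def mink_def complex_eq_iff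
        power2_eq_square algebra_simps) (metis unit)
qed

lemma frechet_derivative_act_Killing:
  assumes "A \<in> O12" "det A = 1" "(A *v lift z)$1 \<noteq> 0"
  shows "frechet_derivative (act A) (at z) (Killing \<tau> z) = Killing (A *v \<tau>) (act A z)"
proof -
  let ?p = "A *v lift z"
  have "frechet_derivative (act A) (at z) (Killing \<tau> z) = DPi ?p (mcross ?p (A *v \<tau>))"
    by (simp add: Killing_eq_DPi frechet_derivative_act_DPi[OF assms(3)] O12_mcross[OF assms(1,2)])
  also have "\<dots> = DPi ((1 / ?p$1) *\<^sub>R ?p) (mcross ((1 / ?p$1) *\<^sub>R ?p) (A *v \<tau>))"
    using assms(3) by (simp add: mcross_scaleR_left DPi_scaleR)
  also have "\<dots> = Killing (A *v \<tau>) (act A z)"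
    using assms(3) by (simp add: Killing_eq_DPi act_def lift_Pi)
  finally show ?thesis .
qed

lemma frechet_derivative_act_rotation:
  assumes "A \<in> O12" "det A = 1" "z \<in> sphere 0 1"
  shows "frechet_derivative (act A) (at z) (\<i> * z * complex_of_real t)
       = \<i> * act A z * complex_of_real (t / (A *v lift z)$1)"
proof -
  let ?p = "A *v lift z"
  let ?e = "vector [-1, 0, 0] :: real^3"
  have p1: "?p$1 \<noteq> 0"
    using O12_lift_nth_1_nonzero[OF assms(1,3)] .
  have "linear (frechet_derivative (act A) (at z))"
    using act_has_derivative[OF p1]
    by (metis frechet_derivative_at has_derivative_bounded_linear bounded_linear.linear)
  moreover have "\<i> * z * complex_of_real t = t *\<^sub>R Killing ?e z"
    using Killing_on_sphere[OF assms(3)] by (simp add: mink_def lift_def scaleR_conv_of_real)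
  ultimately have "frechet_derivative (act A) (at z) (\<i> * z * complex_of_real t)
      = t *\<^sub>R Killing (A *v ?e) (act A z)"
    by (simp add: linear_scale frechet_derivative_act_Killing[OF assms(1,2) p1])
  moreover have "mink (lift (act A z)) (A *v ?e) = 1 / ?p$1"
  proof -
    have "mink (lift (act A z)) (A *v ?e) = mink ?p (A *v ?e) / ?p$1"
      using p1 by (simp add: act_def lift_Pi mink_scaleR_left)
    also have "\<dots> = 1 / ?p$1"
      using assms(1) by (simp add: O12_def mink_def lift_def)
    finally show ?thesis .
  qed
  ultimately show ?thesis
    using Killing_on_sphere[OF act_in_sphere[OF assms(1,3)]] by (simp add: scaleR_conv_of_real)
qed

lemma supp_eqI:
  assumes "w \<noteq> 0" "Y w = \<i> * w * complex_of_real s"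
  shows "supp Y w = s"
  unfolding supp_def
proof (rule the_equality)
  show "Y w = \<i> * w * complex_of_real s" by (fact assms(2))
  fix t assume "Y w = \<i> * w * complex_of_real t"
  thus "t = s" using assms by simp
qed

lemma gr_eq_image_gr:
  assumes "f ` sphere 0 1 = sphere 0 1"
    and "\<And>z. z \<in> sphere 0 1 \<Longrightarrow> T (z, \<phi> z) = (f z, \<psi> (f z))"
  shows "gr \<psi> = T ` gr \<phi>"
proof -
  have gr_image: "gr g = (\<lambda>z. (z, g z)) ` sphere 0 1" for g :: "complex \<Rightarrow> real"
    by (auto simp: gr_def)
  have "T ` gr \<phi> = (\<lambda>z. T (z, \<phi> z)) ` sphere 0 1"
    by (simp add: gr_image image_image)
  also have "\<dots> = (\<lambda>z. (f z, \<psi> (f z))) ` sphere 0 1"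
    by (rule image_cong[OF refl assms(2)])
  also have "\<dots> = (\<lambda>w. (w, \<psi> w)) ` f ` sphere 0 1"
    by (simp add: image_image)
  also have "\<dots> = gr \<psi>"
    by (simp add: assms(1) gr_image)
  finally show ?thesis by (rule sym)
qed

lemma Is_Pair: "Is A \<sigma> (z, s) = (act A z, s / (A *v lift z)$1 + mink (lift (act A z)) \<sigma>)"
  by (simp add: Is_def mink_def)

theorem lemma2p12:
  fixes X :: "complex \<Rightarrow> complex" and A :: "real^3^3" and \<sigma> :: "real^3"
  assumes "\<forall>z\<in>sphere 0 1. \<exists>t::real. X z = \<i> * z * complex_of_real t"
    and "A \<in> O12_0"
  shows "gr (supp (\<lambda>w. pushforward A X w + Killing \<sigma> w)) = Is A \<sigma> ` gr (supp X)"
proof -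
  have A: "A \<in> O12" "det A = 1"
    using O12_0_det[OF assms(2)] by blast+
  have bij: "bij_betw (act A) (sphere 0 1) (sphere 0 1)"
    using act_bij_betw_sphere[OF A(1)] .
  show ?thesis
  proof (rule gr_eq_image_gr)
    show "act A ` sphere 0 1 = sphere 0 1"
      using bij by (simp add: bij_betw_def)
    fix z :: complex
    assume z: "z \<in> sphere 0 1"
    let ?w = "act A z"
    have X: "X z = \<i> * z * complex_of_real (supp X z)"
      using assms(1) z supp_eqI[of z X] by force
    have "pushforward A X ?w = \<i> * ?w * complex_of_real (supp X z / (A *v lift z)$1)"
      using bij z
      by (simp add: pushforward_def bij_betw_inv_into_left X frechet_derivative_act_rotation[OF A z])
    hence "supp (\<lambda>w. pushforward A X w + Killing \<sigma> w) ?w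
        = supp X z / (A *v lift z)$1 + mink (lift ?w) \<sigma>"
      using act_in_sphere[OF A(1) z]
      by (intro supp_eqI) (auto simp: Killing_on_sphere algebra_simps)
    thus "Is A \<sigma> (z, supp X z) = (?w, supp (\<lambda>w. pushforward A X w + Killing \<sigma> w) ?w)"
      by (simp add: Is_Pair)
  qed
qed

end
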